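(* Let $R$ be a spherical polygon contained in the interior of a hemisphere of the unit sphere, and let $\mathcal D$ be a Spherical Diagram. Let $x$ be a point of the union of the arcs of $\mathcal D$ lying in the interior of $R$. Then for every great circle $\gamma$ through $x$ there are arcs of $\mathcal D$ that thrust the boundary of $R$ at two distinct points $y$ and $z$, where $y$ and $z$ lie in the two different closed hemispheres bounded by $\gamma$ (i.e., on opposite sides of $\gamma$ or on $\gamma$), and both $y$ and $z$ are internally $R$-connected (with respect to $\mathcal D$) with $x$.
   Context: A geodesic arc on the unit sphere in $\mathbb R^3$ is the unique shortest curve joining two non-antipodal points. An arc $a$ blocks an arc $b$ (equivalently, $b$ hits $a$) if an endpoint of $b$ lies in the relative interior of $a$. A Spherical Diagram (SD) is a finite non-empty collection $\mathcal D$ of pairwise interior-disjoint geodesic arcs on the unit sphere such that each arc of $\mathcal D$ is blocked by arcs of $\mathcal D$ at each of its endpoints. For a spherical polygon $R$ contained in the interior of a hemisphere, an arc $a$ thrusts the boundary of $R$ at a point $y$ if $y\in a\cap\partial R$ and $a$ also intersects the interior of $R$. Two points are internally $R$-connected (with respect to $\mathcal D$) if there is a path between them contained in the union of the arcs of $\mathcal D$, all of whose points except possibly its endpoints lie in the interior of $R$. *)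

theory Defs
  imports "HOL-Analysis.Analysis"
begin

type_synonym pt = "real^3"

abbreviation S2 :: "pt set" where "S2 \<equiv> sphere 0 1"

text \<open>Geodesic arcs are represented by their ordered pair of endpoints (p, q),
 with p, q on the unit sphere, p \<noteq> q and p, q not antipodal.  The arc is the radial
 projection of the chord segment onto the sphere.\<close>

definition valid_arc :: "pt \<times> pt \<Rightarrow> bool" where
  "valid_arc a \<longleftrightarrow> fst a \<in> S2 \<and> snd a \<in> S2 \<and> fst a \<noteq> snd a \<and> fst a \<noteq> - snd a"

definition arcpath :: "pt \<Rightarrow> pt \<Rightarrow> real \<Rightarrow> pt" where
  "arcpath p q t = (1 / norm ((1 - t) *\<^sub>R p + t *\<^sub>R q)) *\<^sub>R ((1 - t) *\<^sub>R p + t *\<^sub>R q)"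

definition arc_set :: "pt \<times> pt \<Rightarrow> pt set" where
  "arc_set a = arcpath (fst a) (snd a) ` {0..1}"

definition arc_relint :: "pt \<times> pt \<Rightarrow> pt set" where
  "arc_relint a = arcpath (fst a) (snd a) ` {0<..<1}"

definition spherical_diagram :: "(pt \<times> pt) set \<Rightarrow> bool" where
  "spherical_diagram D \<longleftrightarrow> finite D \<and> D \<noteq> {} \<and> (\<forall>a\<in>D. valid_arc a)
     \<and> (\<forall>a\<in>D. \<forall>b\<in>D. a \<noteq> b \<longrightarrow> arc_relint a \<inter> arc_relint b = {})
     \<and> (\<forall>a\<in>D. (\<exists>b\<in>D. fst a \<in> arc_relint b) \<and> (\<exists>c\<in>D. snd a \<in> arc_relint c))"

fun polypath :: "pt list \<Rightarrow> real \<Rightarrow> pt" where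
  "polypath [] = (\<lambda>t. 0)"
| "polypath [p] = (\<lambda>t. p)"
| "polypath [p, q] = arcpath p q"
| "polypath (p # q # r # vs) = arcpath p q +++ polypath (q # r # vs)"

definition spherical_polygon :: "pt set \<Rightarrow> bool" where
  "spherical_polygon R \<longleftrightarrow>
     (\<exists>vs. length vs \<ge> 3 \<and> hd vs = last vs
        \<and> (\<forall>i < length vs - 1. valid_arc (vs ! i, vs ! Suc i))
        \<and> simple_path (polypath vs)
        \<and> (\<exists>C \<in> components (S2 - path_image (polypath vs)). R = closure C))"

definition sph_interior :: "pt set \<Rightarrow> pt set" where
  "sph_interior R = {x \<in> R. \<exists>e>0. S2 \<inter> ball x e \<subseteq> R}"

definition sph_boundary :: "pt set \<Rightarrow> pt set" where
  "sph_boundary R = closure R - sph_interior R"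

definition in_open_hemisphere :: "pt set \<Rightarrow> bool" where
  "in_open_hemisphere R \<longleftrightarrow> (\<exists>u. u \<noteq> 0 \<and> (\<forall>v\<in>R. u \<bullet> v > 0))"

definition thrusts :: "pt set \<Rightarrow> pt \<times> pt \<Rightarrow> pt \<Rightarrow> bool" where
  "thrusts R a y \<longleftrightarrow> y \<in> arc_set a \<and> y \<in> sph_boundary R \<and> arc_set a \<inter> sph_interior R \<noteq> {}"

definition internally_connected :: "pt set \<Rightarrow> (pt \<times> pt) set \<Rightarrow> pt \<Rightarrow> pt \<Rightarrow> bool" where
  "internally_connected R D x y \<longleftrightarrow>
     (\<exists>g. path g \<and> pathstart g = x \<and> pathfinish g = y
        \<and> path_image g \<subseteq> (\<Union>a\<in>D. arc_set a)
        \<and> (\<forall>t\<in>{0<..<1}. g t \<in> sph_interior R))"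

end

theory Submission
  imports Defs
begin

text \<open>Choose \<open>u\<close> with \<open>R\<close> inside the open hemisphere \<open>u \<bullet> v > 0\<close>.  Central (gnomonic)
projection onto the tangent plane \<open>u \<bullet> v = 1\<close> maps great circles to lines, so ordering
points lexicographically by their \<open>n\<close>- and \<open>u \<times> n\<close>-coordinates in that plane gives a strict
order that increases strictly along every geodesic arc in one of its two orientations.
Starting from \<open>x\<close>, walk upwards through the diagram: \<open>x\<close> lies in the relative interior of
some arc (an endpoint is blocked by another arc), which we follow upwards until it either
leaves the interior of \<open>R\<close>, where it thrusts the boundary, or ends inside \<open>R\<close>, where we
start again.  The number of arcs still having a point of \<open>R\<close> above the current point
drops at every restart, so the walk stops.  Walking upwards for \<open>n\<close> and for \<open>-n\<close> gives
\<open>y\<close> above \<open>x\<close> and \<open>z\<close> below \<open>x\<close>; since \<open>n \<bullet> x = 0\<close> these lie on the required sides,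
and \<open>z < x < y\<close> forces \<open>y \<noteq> z\<close>.\<close>

lemma valid_arc_swap: "valid_arc (q, p) \<longleftrightarrow> valid_arc (p, q)"
  unfolding valid_arc_def by (auto simp: minus_equation_iff)

lemma valid_arc_lin_indep:
  assumes "valid_arc (p, q)" and "a *\<^sub>R p + b *\<^sub>R q = 0"
  shows "a = 0 \<and> b = 0"
proof -
  have p: "norm p = 1" and q: "norm q = 1" and "p \<noteq> q" "p \<noteq> - q"
    using assms(1) unfolding valid_arc_def by auto
  have "a *\<^sub>R p = - (b *\<^sub>R q)"
    using assms(2) by (simp add: eq_neg_iff_add_eq_0)
  then have "norm (a *\<^sub>R p) = norm (b *\<^sub>R q)"
    by (metis norm_minus_cancel)
  then have "\<bar>a\<bar> = \<bar>b\<bar>"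
    using p q by simp
  then have "b = a \<or> b = - a"
    by arith
  then show ?thesis
  proof
    assume "b = a"
    then have "a *\<^sub>R (p + q) = 0"
      using assms(2) by (simp add: scaleR_right_distrib)
    then show ?thesis
      using \<open>p \<noteq> - q\<close> \<open>b = a\<close> by (auto simp: eq_neg_iff_add_eq_0)
  next
    assume "b = - a"
    then have "a *\<^sub>R (p - q) = 0"
      using assms(2) by (simp add: scaleR_diff_right)
    then show ?thesis
      using \<open>p \<noteq> q\<close> \<open>b = - a\<close> by auto
  qed
qed

lemma arc_chord_nonzero:
  assumes "valid_arc (p, q)" shows "(1 - t) *\<^sub>R p + t *\<^sub>R q \<noteq> 0"
  using valid_arc_lin_indep[OF assms, of "1 - t" t] by auto

lemma path_arcpath:
  assumes "valid_arc (p, q)" shows "path (arcpath p q)"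
  unfolding path_def arcpath_def
  by (intro continuous_intros) (use arc_chord_nonzero[OF assms] in auto)

lemma arcpath_in_sphere:
  assumes "valid_arc (p, q)" shows "arcpath p q t \<in> S2"
  using arc_chord_nonzero[OF assms] by (simp add: arcpath_def)

lemma arcpath_0: "valid_arc (p, q) \<Longrightarrow> arcpath p q 0 = p"
  and arcpath_1: "valid_arc (p, q) \<Longrightarrow> arcpath p q 1 = q"
  unfolding valid_arc_def by (simp_all add: arcpath_def)

lemma arcpath_reverse: "arcpath q p t = arcpath p q (1 - t)"
  unfolding arcpath_def by (simp add: add.commute)

lemma arcpath_reverse_image:
  assumes "(\<lambda>t. 1 - t) ` A = A" shows "arcpath q p ` A = arcpath p q ` A"
proof -
  have "arcpath q p ` A = arcpath p q ` (\<lambda>t. 1 - t) ` A"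
    by (simp add: image_image arcpath_reverse[of q p])
  then show ?thesis using assms by simp
qed

lemma arc_set_reverse: "arc_set (q, p) = arc_set (p, q)"
  and arc_relint_reverse: "arc_relint (q, p) = arc_relint (p, q)"
proof -
  have "(\<lambda>t::real. 1 - t) ` {0..1} = {0..1}"
    by force
  moreover have "(\<lambda>t::real. 1 - t) ` {0<..<1} = {0<..<1}"
    by (auto simp: image_iff intro!: bexI[where x = "1 - _"])
  ultimately show "arc_set (q, p) = arc_set (p, q)" "arc_relint (q, p) = arc_relint (p, q)"
    by (simp_all add: arc_set_def arc_relint_def arcpath_reverse_image)
qed

lemma spherical_diagram_relint_cover:
  assumes "spherical_diagram D" "a \<in> D" "x \<in> arc_set a"
  shows "\<exists>b\<in>D. x \<in> arc_relint b"
proof -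
  obtain t where t: "t \<in> {0..1}" "x = arcpath (fst a) (snd a) t"
    using assms(3) unfolding arc_set_def by auto
  have "valid_arc (fst a, snd a)"
    using assms(1,2) unfolding spherical_diagram_def by auto
  then consider "x = fst a" | "x = snd a" | "x \<in> arc_relint a"
    using t arcpath_0 arcpath_1 unfolding arc_relint_def
    by (metis atLeastAtMost_iff greaterThanLessThan_iff image_eqI order_less_le)
  then show ?thesis
  proof cases
    case 3
    then show ?thesis using assms(2) by blast
  qed (use assms(1,2) in \<open>auto simp: spherical_diagram_def\<close>)
qed

lemma sph_interior_subset: "sph_interior R \<subseteq> R"
  unfolding sph_interior_def by auto

lemma sph_boundary_subset: "closed R \<Longrightarrow> sph_boundary R \<subseteq> R"
  unfolding sph_boundary_def by simp

lemma sph_interior_eq: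
  assumes "R \<subseteq> S2" shows "sph_interior R = S2 \<inter> interior (R \<union> - S2)"
proof -
  have "x \<in> sph_interior R \<longleftrightarrow> x \<in> S2 \<and> (\<exists>e>0. ball x e \<subseteq> R \<union> - S2)" for x
  proof -
    have "S2 \<inter> ball x e \<subseteq> R \<longleftrightarrow> ball x e \<subseteq> R \<union> - S2" for e
      by blast
    moreover have "x \<in> R" if "x \<in> S2" "0 < e" "S2 \<inter> ball x e \<subseteq> R" for e
      using that by auto
    ultimately show ?thesis
      using assms unfolding sph_interior_def by blast
  qed
  then show ?thesis
    by (auto simp: mem_interior)
qed

lemma closed_sphere_diff_sph_interior:
  assumes "R \<subseteq> S2" shows "closed (S2 - sph_interior R)"
proof -
  have "S2 - sph_interior R = S2 \<inter> - interior (R \<union> - S2)"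
    using sph_interior_eq[OF assms] by blast
  then show ?thesis
    by (simp add: closed_Int open_interior closed_Compl)
qed

lemma sph_boundary_at_first_exit:
  fixes a t1 :: real
  assumes "closed R" "continuous_on {a..t1} g" "a < t1"
    and "\<forall>t\<in>{a..<t1}. g t \<in> sph_interior R" "g t1 \<notin> sph_interior R"
  shows "g t1 \<in> sph_boundary R"
proof -
  have "g ` {a..<t1} \<subseteq> R"
    using assms(4) sph_interior_subset by blast
  moreover have "continuous_on (closure {a..<t1}) g"
    using assms(2,3) by simp
  ultimately have "g ` closure {a..<t1} \<subseteq> R"
    using image_closure_subset[OF _ assms(1)] by blast
  then have "g t1 \<in> R"
    using assms(3) by (simp add: image_subset_iff)
  then show ?thesis
    using assms(1,5) unfolding sph_boundary_def by simp
qed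

lemma first_exit_from_sph_interior:
  fixes a b :: real
  assumes R: "closed R" "R \<subseteq> S2"
    and g: "continuous_on {a..b} g" "g ` {a..b} \<subseteq> S2" and start: "g a \<in> sph_interior R"
  obtains "\<forall>t\<in>{a..b}. g t \<in> sph_interior R"
  | t1 where "a < t1" "t1 \<le> b" "g t1 \<in> sph_boundary R" "\<forall>t\<in>{a..<t1}. g t \<in> sph_interior R"
proof -
  define T where "T = {a..b} \<inter> g -` (S2 - sph_interior R)"
  have T: "t \<in> T \<longleftrightarrow> t \<in> {a..b} \<and> g t \<notin> sph_interior R" for t
    using g(2) unfolding T_def by blast
  have "closed T"
    using continuous_closed_preimage[OF g(1) _ closed_sphere_diff_sph_interior[OF R(2)]]
    unfolding T_def by simp
  moreover have "T \<subseteq> {a..b}"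
    unfolding T_def by blast
  ultimately have "compact T"
    by (meson bounded_closed_interval bounded_subset compact_eq_bounded_closed)
  show thesis
  proof (cases "T = {}")
    case True
    then show thesis
      using T that(1) by blast
  next
    case False
    then obtain t1 where t1: "t1 \<in> T" "\<And>t. t \<in> T \<Longrightarrow> t1 \<le> t"
      using compact_attains_inf[OF \<open>compact T\<close>] by blast
    have "a \<le> t1" "t1 \<le> b" "g t1 \<notin> sph_interior R"
      using t1(1) T by auto
    then have "a < t1"
      using start by (cases "a = t1") auto
    have inside: "\<forall>t\<in>{a..<t1}. g t \<in> sph_interior R"
    proof
      fix t assume "t \<in> {a..<t1}"
      then have "t \<notin> T" "t \<in> {a..b}"
        using t1(2) \<open>t1 \<le> b\<close> by force+
      then show "g t \<in> sph_interior R"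
        using T by blast
    qed
    have "continuous_on {a..t1} g"
      using continuous_on_subset[OF g(1)] \<open>t1 \<le> b\<close> by simp
    then have "g t1 \<in> sph_boundary R"
      using sph_boundary_at_first_exit R(1) \<open>a < t1\<close> inside \<open>g t1 \<notin> sph_interior R\<close> by blast
    then show thesis
      using that(2) \<open>a < t1\<close> \<open>t1 \<le> b\<close> inside by blast
  qed
qed

lemma internally_connected_trans:
  assumes "internally_connected R D x y" "internally_connected R D y z" "y \<in> sph_interior R"
  shows "internally_connected R D x z"
proof -
  obtain g where g: "path g" "pathstart g = x" "pathfinish g = y"
    "path_image g \<subseteq> (\<Union>a\<in>D. arc_set a)" "\<forall>t\<in>{0<..<1}. g t \<in> sph_interior R"
    using assms(1) unfolding internally_connected_def by blast
  obtain h where h: "path h" "pathstart h = y" "pathfinish h = z"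
    "path_image h \<subseteq> (\<Union>a\<in>D. arc_set a)" "\<forall>t\<in>{0<..<1}. h t \<in> sph_interior R"
    using assms(2) unfolding internally_connected_def by blast
  have "(g +++ h) t \<in> sph_interior R" if t: "t \<in> {0<..<1}" for t
  proof -
    consider "t < 1/2" | "t = 1/2" | "t > 1/2"
      by linarith
    then show ?thesis
    proof cases
      case 2
      then show ?thesis
        using g(3) assms(3) unfolding 2 joinpaths_def pathfinish_def by simp
    qed (use t g(5) h(5) in \<open>auto simp: joinpaths_def\<close>)
  qed
  moreover have "path_image (g +++ h) \<subseteq> (\<Union>a\<in>D. arc_set a)"
    using path_image_join_subset g(4) h(4) by blast
  moreover have "path (g +++ h)"
    using g(1,3) h(1,2) by simp
  ultimately show ?thesis
    using g(2) h(3) unfolding internally_connected_def by (metis pathstart_join pathfinish_join)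
qed

lemma internally_connected_subpath:
  assumes g: "path g" "path_image g \<subseteq> (\<Union>a\<in>D. arc_set a)"
    and st: "0 \<le> s" "s < t" "t \<le> 1"
    and inside: "\<And>\<tau>. s < \<tau> \<Longrightarrow> \<tau> < t \<Longrightarrow> g \<tau> \<in> sph_interior R"
  shows "internally_connected R D (g s) (g t)"
  unfolding internally_connected_def
proof (intro exI conjI ballI)
  show "path (subpath s t g)"
    using g(1) st by simp
  show "path_image (subpath s t g) \<subseteq> (\<Union>a\<in>D. arc_set a)"
    using path_image_subpath_subset[of s t g] st g(2) by simp
  fix \<tau> :: real
  assume "\<tau> \<in> {0<..<1}"
  then have "0 < (t - s) * \<tau>" "(t - s) * \<tau> < t - s"
    using st by (simp_all add: mult_less_cancel_left2)
  then show "subpath s t g \<tau> \<in> sph_interior R"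
    unfolding subpath_def using inside by simp
qed simp_all

text \<open>Monotonicity is only required at points of \<open>R\<close>: the gnomonic order used below is
  meaningful only on the hemisphere containing \<open>R\<close>.\<close>

definition increasing_along :: "(pt \<Rightarrow> pt \<Rightarrow> bool) \<Rightarrow> pt set \<Rightarrow> pt \<Rightarrow> pt \<Rightarrow> bool" where
  "increasing_along lt R p q \<longleftrightarrow>
     (\<forall>t s. 0 \<le> t \<longrightarrow> t < s \<longrightarrow> s \<le> 1 \<longrightarrow> arcpath p q t \<in> R \<longrightarrow> arcpath p q s \<in> R
        \<longrightarrow> lt (arcpath p q t) (arcpath p q s))"

lemma spherical_diagram_increasing_arc_through:
  assumes D: "spherical_diagram D"
    and oriented: "\<And>b. b \<in> D \<Longrightarrow> \<exists>p q. (b = (p, q) \<or> b = (q, p)) \<and> increasing_along lt R p q"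
    and x: "x \<in> (\<Union>a\<in>D. arc_set a)"
  obtains b p q t0 where "b \<in> D" "valid_arc (p, q)" "arc_set b = arcpath p q ` {0..1}"
    "increasing_along lt R p q" "0 < t0" "t0 < 1" "x = arcpath p q t0"
proof -
  obtain b where b: "b \<in> D" "x \<in> arc_relint b"
    using x spherical_diagram_relint_cover[OF D] by blast
  obtain p q where pq: "b = (p, q) \<or> b = (q, p)" "increasing_along lt R p q"
    using oriented[OF b(1)] by blast
  have "valid_arc (p, q)"
    using D b(1) pq(1) valid_arc_swap unfolding spherical_diagram_def by blast
  moreover have "arc_set b = arc_set (p, q)" "arc_relint b = arc_relint (p, q)"
    using pq(1) arc_set_reverse arc_relint_reverse by auto
  moreover obtain t0 where "0 < t0" "t0 < 1" "x = arcpath p q t0"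
    using b(2) calculation(3) unfolding arc_relint_def by auto
  ultimately show thesis
    using that b(1) pq(2) unfolding arc_set_def by simp
qed

lemma increasing_arc_exit_or_end:
  assumes R: "closed R" "R \<subseteq> S2" and pq: "valid_arc (p, q)" "increasing_along lt R p q"
    and arc: "arcpath p q ` {0..1} \<subseteq> (\<Union>a\<in>D. arc_set a)"
    and t0: "0 \<le> t0" "t0 < 1" "arcpath p q t0 \<in> sph_interior R"
  obtains t1 where "t0 < t1" "t1 \<le> 1" "arcpath p q t1 \<in> sph_boundary R"
      "lt (arcpath p q t0) (arcpath p q t1)" "internally_connected R D (arcpath p q t0) (arcpath p q t1)"
  | "arcpath p q 1 \<in> sph_interior R"
      "lt (arcpath p q t0) (arcpath p q 1)" "internally_connected R D (arcpath p q t0) (arcpath p q 1)"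
proof -
  define P where "P = arcpath p q"
  have P: "path P" "path_image P \<subseteq> (\<Union>a\<in>D. arc_set a)"
    using path_arcpath[OF pq(1)] arc unfolding P_def path_image_def by auto
  have up: "lt (P t) (P s)" if "t0 \<le> t" "t < s" "s \<le> 1" "P t \<in> R" "P s \<in> R" for t s
    using pq(2) t0(1) that unfolding increasing_along_def P_def by auto
  have "continuous_on {t0..1} P"
    using continuous_on_subset[OF P(1)[unfolded path_def]] t0(1) by simp
  moreover have "P ` {t0..1} \<subseteq> S2"
    using arcpath_in_sphere[OF pq(1)] unfolding P_def by blast
  moreover have "P t0 \<in> sph_interior R"
    using t0(3) unfolding P_def .
  ultimately show thesis
  proof (rule first_exit_from_sph_interior[OF R, of t0 1 P])
    fix t1 assume t1: "t0 < t1" "t1 \<le> 1" "P t1 \<in> sph_boundary R"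
      and inside: "\<forall>t\<in>{t0..<t1}. P t \<in> sph_interior R"
    have "lt (P t0) (P t1)"
      using up[of t0 t1] t1 \<open>P t0 \<in> sph_interior R\<close> sph_interior_subset
        sph_boundary_subset[OF R(1)] by blast
    moreover have "internally_connected R D (P t0) (P t1)"
      using internally_connected_subpath[OF P, of t0 t1] t0(1) t1(1,2) inside by simp
    ultimately show thesis
      using that(1) t1 unfolding P_def by blast
  next
    assume inside: "\<forall>t\<in>{t0..1}. P t \<in> sph_interior R"
    then have "P 1 \<in> sph_interior R"
      using t0(2) by simp
    moreover have "lt (P t0) (P 1)"
      using up[of t0 1] t0(2) \<open>P t0 \<in> sph_interior R\<close> calculation sph_interior_subset by blast
    moreover have "internally_connected R D (P t0) (P 1)"
      using internally_connected_subpath[OF P, of t0 1] t0(1,2) inside by simp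
    ultimately show thesis
      using that(2) unfolding P_def by blast
  qed
qed

definition arcs_above :: "(pt \<Rightarrow> pt \<Rightarrow> bool) \<Rightarrow> pt set \<Rightarrow> (pt \<times> pt) set \<Rightarrow> pt \<Rightarrow> (pt \<times> pt) set" where
  "arcs_above lt R D x = {a \<in> D. \<exists>y \<in> arc_set a \<inter> R. lt x y}"

lemma arcs_above_end_of_arc:
  assumes lt: "transp lt" "asymp lt"
    and b: "b \<in> D" "arc_set b = arcpath p q ` {0..1}" "increasing_along lt R p q"
    and e: "arcpath p q 1 \<in> R" "lt x (arcpath p q 1)"
  shows "arcs_above lt R D (arcpath p q 1) \<subset> arcs_above lt R D x"
proof -
  have "\<not> lt (arcpath p q 1) w" if w: "w \<in> arc_set b \<inter> R" for w
  proof -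
    obtain s where "0 \<le> s" "s \<le> 1" "w = arcpath p q s"
      using w b(2) by auto
    then show ?thesis
      using b(3) e(1) w asympD[OF lt(2)] unfolding increasing_along_def
      by (cases "s = 1") auto
  qed
  moreover have "arcpath p q 1 \<in> arc_set b"
    using b(2) by simp
  ultimately show ?thesis
    using b(1) e transpD[OF lt(1), of x "arcpath p q 1"] unfolding arcs_above_def by blast
qed

lemma spherical_diagram_walk_to_boundary:
  assumes R: "closed R" "R \<subseteq> S2" and D: "spherical_diagram D"
    and lt: "transp lt" "asymp lt"
    and oriented: "\<And>b. b \<in> D \<Longrightarrow> \<exists>p q. (b = (p, q) \<or> b = (q, p)) \<and> increasing_along lt R p q"
  shows "x \<in> sph_interior R \<Longrightarrow> x \<in> (\<Union>a\<in>D. arc_set a) \<Longrightarrow>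
    \<exists>y a. a \<in> D \<and> thrusts R a y \<and> lt x y \<and> internally_connected R D x y"
proof (induction "card (arcs_above lt R D x)" arbitrary: x rule: less_induct)
  case less
  obtain b p q t0 where b: "b \<in> D" "valid_arc (p, q)" "arc_set b = arcpath p q ` {0..1}"
      "increasing_along lt R p q" "0 < t0" "t0 < 1" "x = arcpath p q t0"
    using spherical_diagram_increasing_arc_through[OF D oriented less.prems(2)] by blast
  have "x \<in> arc_set b"
    using b(3,5-7) by auto
  have arc: "arcpath p q ` {0..1} \<subseteq> (\<Union>a\<in>D. arc_set a)"
    using b(1,3) by blast
  have start: "0 \<le> t0" "arcpath p q t0 \<in> sph_interior R"
    using b(5,7) less.prems(1) by simp_all
  show ?case
  proof (cases rule: increasing_arc_exit_or_end[OF R b(2,4) arc start(1) b(6) start(2)])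
    case (1 t1)
    then have "thrusts R b (arcpath p q t1)"
      unfolding thrusts_def using b(3,5) \<open>x \<in> arc_set b\<close> less.prems(1) by auto
    then show ?thesis
      using 1 b(1,7) by blast
  next
    case 2
    define e where "e = arcpath p q 1"
    have e: "e \<in> sph_interior R" "lt x e" "internally_connected R D x e"
      using 2 b(7) unfolding e_def by auto
    have "arcs_above lt R D e \<subset> arcs_above lt R D x"
      using arcs_above_end_of_arc[OF lt b(1,3,4)] e(1,2) sph_interior_subset unfolding e_def by blast
    then have "card (arcs_above lt R D e) < card (arcs_above lt R D x)"
      using D unfolding spherical_diagram_def arcs_above_def by (simp add: psubset_card_mono)
    moreover have "e \<in> (\<Union>a\<in>D. arc_set a)"
      using b(1,3) unfolding e_def by force
    ultimately obtain y a where "a \<in> D" "thrusts R a y" "lt e y" "internally_connected R D e y"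
      using less.hyps[OF _ e(1)] by blast
    then show ?thesis
      using e transpD[OF lt(1), of x e y] internally_connected_trans by blast
  qed
qed

definition gnomonic :: "pt \<Rightarrow> pt \<Rightarrow> pt \<Rightarrow> real" where
  "gnomonic u n y = (n \<bullet> y) / (u \<bullet> y)"

text \<open>The second coordinate breaks ties along great circles through \<open>\<plusminus>(u \<times> n)\<close>, on which
  the first one is constant.\<close>

definition gnomonic_less :: "pt \<Rightarrow> pt \<Rightarrow> pt \<Rightarrow> pt \<Rightarrow> bool" where
  "gnomonic_less u n y z \<longleftrightarrow> gnomonic u n y < gnomonic u n z
     \<or> (gnomonic u n y = gnomonic u n z \<and> gnomonic u (cross3 u n) y < gnomonic u (cross3 u n) z)"

lemma transp_gnomonic_less: "transp (gnomonic_less u n)"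
  by (rule transpI) (auto simp: gnomonic_less_def)

lemma asymp_gnomonic_less: "asymp (gnomonic_less u n)"
  by (rule asympI) (auto simp: gnomonic_less_def)

lemma gnomonic_less_uminus: "gnomonic_less u (- n) y z \<longleftrightarrow> gnomonic_less u n z y"
  by (auto simp: gnomonic_less_def gnomonic_def)

lemma gnomonic_less_nonneg:
  assumes "n \<bullet> x = 0" "0 < u \<bullet> y" "gnomonic_less u n x y"
  shows "0 \<le> n \<bullet> y"
proof -
  have "0 \<le> (n \<bullet> y) / (u \<bullet> y)"
    using assms(1,3) unfolding gnomonic_less_def gnomonic_def by auto
  then show ?thesis
    using assms(2) by (simp add: zero_le_divide_iff)
qed

lemma gnomonic_scaleR: "c \<noteq> 0 \<Longrightarrow> gnomonic u n (c *\<^sub>R y) = gnomonic u n y"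
  by (simp add: gnomonic_def)

lemma gnomonic_chord_diff:
  fixes p q :: pt
  defines "V \<equiv> \<lambda>t. (1 - t) *\<^sub>R p + t *\<^sub>R q"
  assumes "u \<bullet> V s \<noteq> 0" "u \<bullet> V t \<noteq> 0"
  shows "gnomonic u n (V s) - gnomonic u n (V t)
    = (s - t) * (cross3 u n \<bullet> cross3 p q) / ((u \<bullet> V s) * (u \<bullet> V t))"
proof -
  have "(n \<bullet> V s) * (u \<bullet> V t) - (n \<bullet> V t) * (u \<bullet> V s) = (s - t) * (cross3 u n \<bullet> cross3 p q)"
    unfolding V_def dot_cross by (simp add: inner_add_right algebra_simps)
  then show ?thesis
    using assms(2,3) unfolding gnomonic_def by (simp add: diff_frac_eq)
qed

lemma gnomonic_less_increasing_along:
  assumes pq: "valid_arc (p, q)" and R: "R \<subseteq> {v. 0 < u \<bullet> v}"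
    and rate: "0 < cross3 u n \<bullet> cross3 p q
      \<or> (cross3 u n \<bullet> cross3 p q = 0 \<and> 0 < cross3 u (cross3 u n) \<bullet> cross3 p q)"
  shows "increasing_along (gnomonic_less u n) R p q"
  unfolding increasing_along_def
proof (intro allI impI)
  fix t s :: real
  assume "0 \<le> t" "t < s" "s \<le> 1" and in_R: "arcpath p q t \<in> R" "arcpath p q s \<in> R"
  define V where "V \<equiv> \<lambda>t. (1 - t) *\<^sub>R p + t *\<^sub>R q"
  have arcpath_V: "arcpath p q r = (1 / norm (V r)) *\<^sub>R V r" and "V r \<noteq> 0" for r
    unfolding arcpath_def V_def using arc_chord_nonzero[OF pq] by auto
  then have gV: "gnomonic u m (arcpath p q r) = gnomonic u m (V r)" for m r
    by (simp add: gnomonic_scaleR)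
  have "0 < u \<bullet> V t" "0 < u \<bullet> V s"
    using in_R R \<open>\<And>r. V r \<noteq> 0\<close> unfolding arcpath_V by (auto simp: zero_less_divide_iff)
  then have "0 < (s - t) / ((u \<bullet> V s) * (u \<bullet> V t))"
    using \<open>t < s\<close> by simp
  moreover have "gnomonic u m (arcpath p q s) - gnomonic u m (arcpath p q t)
      = (s - t) / ((u \<bullet> V s) * (u \<bullet> V t)) * (cross3 u m \<bullet> cross3 p q)" for m
    unfolding gV V_def using gnomonic_chord_diff \<open>0 < u \<bullet> V t\<close> \<open>0 < u \<bullet> V s\<close>
    by (simp add: V_def)
  ultimately show "gnomonic_less u n (arcpath p q t) (arcpath p q s)"
    using rate unfolding gnomonic_less_def
    by (smt (verit, best) zero_less_mult_iff mult_eq_0_iff)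
qed

lemma cross3_frame_orthogonal_eq_0:
  assumes "cross3 u n \<noteq> 0" "u \<bullet> r = 0" "n \<bullet> r = 0" "cross3 u n \<bullet> r = 0"
  shows "r = 0"
proof -
  have "cross3 r (cross3 u n) = 0"
    using assms(2,3) by (simp add: Lagrange inner_commute)
  then have "(norm r * norm (cross3 u n))\<^sup>2 = 0"
    using norm_cross_dot[of r "cross3 u n"] assms(4) by (simp add: inner_commute)
  then show ?thesis
    using assms(1) by simp
qed

lemma gnomonic_less_orientation:
  assumes pq: "valid_arc (p, q)" and R: "R \<subseteq> {v. 0 < u \<bullet> v}" and un: "cross3 u n \<noteq> 0"
  shows "increasing_along (gnomonic_less u n) R p q \<or> increasing_along (gnomonic_less u n) R q p"
proof -
  define c1 where "c1 = cross3 u n \<bullet> cross3 p q"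
  define c2 where "c2 = cross3 u (cross3 u n) \<bullet> cross3 p q"
  have rev: "cross3 u m \<bullet> cross3 q p = - (cross3 u m \<bullet> cross3 p q)" for m
    by (metis cross_skew inner_minus_right)
  show ?thesis
  proof (cases "c1 = 0 \<and> c2 = 0")
    case False
    then have "(0 < c1 \<or> c1 = 0 \<and> 0 < c2) \<or> (0 < - c1 \<or> - c1 = 0 \<and> 0 < - c2)"
      by linarith
    then show ?thesis
      using gnomonic_less_increasing_along[OF pq R] pq R
        gnomonic_less_increasing_along[of q p R u n] valid_arc_swap rev
      unfolding c1_def c2_def by metis
  next
    case True
    define r where "r = (u \<bullet> p) *\<^sub>R q - (u \<bullet> q) *\<^sub>R p"
    have "m \<bullet> r = cross3 u m \<bullet> cross3 p q" for m
      unfolding r_def dot_cross by (simp add: inner_diff_right algebra_simps)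
    then have "r = 0"
      using True cross3_frame_orthogonal_eq_0[OF un, of r] unfolding c1_def c2_def r_def
      by (simp add: inner_diff_right)
    then have "u \<bullet> p = 0 \<and> u \<bullet> q = 0"
      using valid_arc_lin_indep[OF pq, of "- (u \<bullet> q)" "u \<bullet> p"] unfolding r_def by auto
    then have "arcpath p q t \<notin> R" for t
      using R unfolding arcpath_def by (auto simp: inner_add_right)
    then show ?thesis
      unfolding increasing_along_def by blast
  qed
qed

lemma cross3_neq_0_if_orthogonality_differs:
  assumes "0 < u \<bullet> x" "n \<bullet> x = 0" "n \<noteq> 0"
  shows "cross3 u n \<noteq> 0"
proof
  assume "cross3 u n = 0"
  then have "(n \<bullet> n) *\<^sub>R u - (n \<bullet> u) *\<^sub>R n = 0"
    using Lagrange[of n u n] by simp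
  then have "(n \<bullet> n) * (u \<bullet> x) = 0"
    using assms(2) by (metis inner_diff_left inner_scaleR_left inner_zero_left mult_zero_right diff_zero)
  then show False
    using assms(1,3) by simp
qed

lemma spherical_diagram_gnomonic_walk:
  assumes "closed R" "R \<subseteq> S2" "R \<subseteq> {v. 0 < u \<bullet> v}" "spherical_diagram D" "cross3 u n \<noteq> 0"
    and "x \<in> sph_interior R" "x \<in> (\<Union>a\<in>D. arc_set a)"
  shows "\<exists>y a. a \<in> D \<and> thrusts R a y \<and> gnomonic_less u n x y \<and> internally_connected R D x y"
proof (rule spherical_diagram_walk_to_boundary[OF assms(1,2,4) transp_gnomonic_less asymp_gnomonic_less _ assms(6,7)])
  fix b assume "b \<in> D"
  then have "valid_arc (fst b, snd b)"
    using assms(4) unfolding spherical_diagram_def by auto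
  then show "\<exists>p q. (b = (p, q) \<or> b = (q, p)) \<and> increasing_along (gnomonic_less u n) R p q"
    using gnomonic_less_orientation[OF _ assms(3,5)] by (metis prod.collapse)
qed

lemma spherical_polygon_closed_subset:
  assumes "spherical_polygon R" shows "closed R" "R \<subseteq> S2"
proof -
  obtain C where "C \<subseteq> S2" "R = closure C"
    using assms in_components_subset unfolding spherical_polygon_def by blast
  then show "closed R" "R \<subseteq> S2"
    using closure_minimal[of C S2] by auto
qed

theorem mainTheorem19:
  fixes R :: "(real^3) set" and D :: "((real^3) \<times> (real^3)) set"
    and x n :: "real^3"
  assumes "spherical_polygon R" and "in_open_hemisphere R"
    and "spherical_diagram D"
    and "x \<in> (\<Union>a\<in>D. arc_set a)" and "x \<in> sph_interior R"
    and "n \<noteq> 0" and "n \<bullet> x = 0"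
  shows "\<exists>y z a b. a \<in> D \<and> b \<in> D \<and> thrusts R a y \<and> thrusts R b z \<and> y \<noteq> z
           \<and> n \<bullet> y \<ge> 0 \<and> n \<bullet> z \<le> 0
           \<and> internally_connected R D x y \<and> internally_connected R D x z"
proof -
  obtain u where u: "R \<subseteq> {v. 0 < u \<bullet> v}"
    using assms(2) unfolding in_open_hemisphere_def by blast
  note R = spherical_polygon_closed_subset[OF assms(1)]
  have "0 < u \<bullet> x"
    using u assms(5) sph_interior_subset by blast
  then have "cross3 u n \<noteq> 0" "cross3 u (- n) \<noteq> 0"
    using cross3_neq_0_if_orthogonality_differs assms(6,7) by auto
  note walk = spherical_diagram_gnomonic_walk[OF R u assms(3) _ assms(5,4)]
  obtain y a where y: "a \<in> D" "thrusts R a y" "gnomonic_less u n x y" "internally_connected R D x y"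
    using walk[OF \<open>cross3 u n \<noteq> 0\<close>] by blast
  obtain z b where z: "b \<in> D" "thrusts R b z" "gnomonic_less u n z x" "internally_connected R D x z"
    using walk[OF \<open>cross3 u (- n) \<noteq> 0\<close>] gnomonic_less_uminus by blast
  have "y \<in> R" "z \<in> R"
    using y(2) z(2) sph_boundary_subset[OF R(1)] unfolding thrusts_def by auto
  then have "0 \<le> n \<bullet> y" "n \<bullet> z \<le> 0"
    using gnomonic_less_nonneg[of n x u y] gnomonic_less_nonneg[of "- n" x u z] y(3) z(3) u assms(7)
      gnomonic_less_uminus by auto
  moreover have "y \<noteq> z"
    using y(3) z(3) transpD[OF transp_gnomonic_less] asympD[OF asymp_gnomonic_less] by blast
  ultimately show ?thesis
    using y z by blast
qed

end
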